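(* Let $\Gamma$ be a finite Abelian group with $|\Gamma|=n$, let $S$ be a symmetric multiset of elements of $\Gamma$ with $|S|=d$, and let $G=\mathrm{Cay}(\Gamma,S)$. Let $0<\epsilon\le 1$ and $\tau = 100\, d\, \phi(G)^2/\epsilon^2$. Then for every $Q\subseteq \Gamma$ with $1\le |Q|\le n/2$ and $\phi_G(Q)\le 2\phi(G)$, $$\|\Pi_{\mathrm{LOW}_\tau(G)}\, \bar{\mathbf{1}}_Q\|^2 \ge (1-\epsilon)\,\|\bar{\mathbf{1}}_Q\|^2.$$
   Context: A multiset $S$ of elements of $\Gamma$ is symmetric if $x$ and $-x$ have equal multiplicity for all $x$. $\mathrm{Cay}(\Gamma,S)$ has vertex set $\Gamma$ and an edge $(v,v+s)$ for every $v$ and every element $s$ of $S$ (with multiplicity). $\phi_G(Q)=|\partial Q|/(d|Q|)$ where $\partial Q$ is the multiset of edges from $Q$ to its complement, and $\phi(G)=\min\{\phi_G(Q):1\le|Q|\le n/2\}$. The normalized Laplacian is $\mathbf{L}=I-\mathbf{A}$ ($\mathbf{A}$ the normalized adjacency matrix). $\mathrm{LOW}_\tau(G)$ is the span of all eigenvectors of $\mathbf{L}$ with eigenvalue at most $\tau$ (the whole space if $\tau\ge2$), and $\Pi_W$ denotes orthogonal projection onto $W$. $\mathbf{1}_Q$ is the indicator vector of $Q$ and $\bar x = x-\frac{\langle x,\mathbf 1\rangle}{n}\mathbf 1$. *)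

theory Defs
  imports "HOL-Analysis.Analysis" "HOL-Library.Multiset"
begin

definition symmetric_mset :: "'a::ab_group_add multiset \<Rightarrow> bool" where
  "symmetric_mset S \<longleftrightarrow> (\<forall>x. count S x = count S (- x))"

text \<open>Adjacency: number of edges (u, u+s), s in S, from u to v.\<close>
definition cay_adj :: "'a::ab_group_add multiset \<Rightarrow> 'a \<Rightarrow> 'a \<Rightarrow> real" where
  "cay_adj S u v = real (count S (v - u))"

definition cay_laplacian :: "('a::{ab_group_add,finite}) multiset \<Rightarrow> (real, 'a) vec \<Rightarrow> (real, 'a) vec" where
  "cay_laplacian S x = (\<chi> u. x $ u - (\<Sum>v\<in>UNIV. cay_adj S u v * x $ v) / real (size S))"

definition cay_boundary :: "'a::{ab_group_add,finite} multiset \<Rightarrow> 'a set \<Rightarrow> real" where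
  "cay_boundary S Q = (\<Sum>u\<in>Q. \<Sum>v\<in>UNIV - Q. cay_adj S u v)"

definition cay_cond_set :: "'a::{ab_group_add,finite} multiset \<Rightarrow> 'a set \<Rightarrow> real" where
  "cay_cond_set S Q = cay_boundary S Q / (real (size S) * real (card Q))"

definition cay_conductance :: "'a::{ab_group_add,finite} multiset \<Rightarrow> real" where
  "cay_conductance S = Min {cay_cond_set S Q | Q::'a set.
      1 \<le> card Q \<and> real (card Q) \<le> real CARD('a) / 2}"

definition low_space :: "('a::{ab_group_add,finite}) multiset \<Rightarrow> real \<Rightarrow> ((real, 'a) vec) set" where
  "low_space S \<tau> = (if \<tau> \<ge> 2 then UNIV
     else span {x. x \<noteq> 0 \<and> (\<exists>lam. lam \<le> \<tau> \<and> cay_laplacian S x = lam *\<^sub>R x)})"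

definition orth_proj :: "('b::euclidean_space) set \<Rightarrow> 'b \<Rightarrow> 'b" where
  "orth_proj W x = (THE p. p \<in> W \<and> (\<forall>w\<in>W. inner (x - p) w = 0))"

definition indicator_vec :: "'a::finite set \<Rightarrow> (real, 'a) vec" where
  "indicator_vec Q = (\<chi> u. if u \<in> Q then 1 else 0)"

definition centered :: "(real, 'a::finite) vec \<Rightarrow> (real, 'a) vec" where
  "centered x = x - ((\<Sum>u\<in>UNIV. x $ u) / real CARD('a)) *\<^sub>R (\<chi> u. 1)"

end

theory Submission
  imports Defs
begin

(*
  Let M = I - L/2 be the lazy random walk, x the indicator vector of Q, x' = x - mean(x) and
  y the component of x' orthogonal to LOW_tau.  On the orthogonal complement of LOW_tau every
  eigenvalue of the positive operator M is below 1 - tau/2, so for every k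

    (1 - (1 - tau/2)^k) |y|^2  <=  <x', x' - M^k x'>  =  <x, x - M^k x>.

  The right-hand side is the expected number of u in Q with u + X outside Q, where X is the
  position of the walk after k steps.  Because Gamma is abelian, X = sum_s m_s * s with m_s the
  net number of steps along the generator s, and the number of u in Q with u + X outside Q is
  subadditive in X; hence the expectation is at most sum_s E|m_s| * |{u in Q. u + s outside Q}|.
  Each m_s is a lazy +-1 walk of variance k c_s / (2d), which gives the bound sqrt(k/(2d)) |dQ|:
  the displacement grows like sqrt k, not like k.  Taking k = ceiling(2/tau) yields
  (3/5) |y|^2 <= (3/10) eps |Q| <= (3/5) eps |x'|^2.
*)

lemma sum_UNIV_add_shift:
  fixes f :: "'a::{ab_group_add,finite} \<Rightarrow> 'b::comm_monoid_add"
  shows "(\<Sum>u\<in>UNIV. f (u + a)) = (\<Sum>u\<in>UNIV. f u)"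
  by (rule sum.reindex_bij_witness[of _ "\<lambda>u. u - a" "\<lambda>u. u + a"]) auto

lemma sum_UNIV_uminus:
  fixes f :: "'a::{ab_group_add,finite} \<Rightarrow> 'b::comm_monoid_add"
  shows "(\<Sum>u\<in>UNIV. f (- u)) = (\<Sum>u\<in>UNIV. f u)"
  by (rule sum.reindex_bij_witness[of _ uminus uminus]) auto

section \<open>Norm bounds for positive symmetric operators\<close>

lemma psd_form_null_vector_orthogonal:
  fixes C :: "'v::real_inner \<Rightarrow> 'v"
  assumes lin: "linear C"
    and sym: "\<And>a b. inner a (C b) = inner b (C a)"
    and V: "subspace V"
    and psd: "\<And>h. h \<in> V \<Longrightarrow> 0 \<le> inner h (C h)"
    and "v \<in> V" "inner v (C v) = 0" "h \<in> V"
  shows "inner h (C v) = 0"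
proof -
  define a where "a = inner h (C v)"
  define q where "q = inner h (C h)"
  have q: "0 \<le> q"
    unfolding q_def using psd \<open>h \<in> V\<close> .
  have expand: "0 \<le> 2 * t * a + t\<^sup>2 * q" for t
  proof -
    have "v + t *\<^sub>R h \<in> V"
      using V \<open>v \<in> V\<close> \<open>h \<in> V\<close> by (simp add: subspace_add subspace_scale)
    then have "0 \<le> inner (v + t *\<^sub>R h) (C (v + t *\<^sub>R h))"
      by (rule psd)
    also have "\<dots> = 2 * t * a + t\<^sup>2 * q"
      using sym[of v h] \<open>inner v (C v) = 0\<close>
      by (simp add: linear_add[OF lin] linear_scale[OF lin] inner_add_left inner_add_right
          a_def q_def power2_eq_square algebra_simps)
    finally show ?thesis .
  qed
  \<comment> \<open>\<open>2ta + t\<^sup>2q \<ge> 0\<close> for all \<open>t\<close> forces \<open>a = 0\<close>; \<open>t = -a/(q+1)\<close> is an explicit witness\<close>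
  define t where "t = - a / (q + 1)"
  have qt: "(q + 1) * t = - a"
    using q by (simp add: t_def)
  have "(q + 1)\<^sup>2 * (2 * t * a + t\<^sup>2 * q) = 2 * ((q + 1) * t) * a * (q + 1) + ((q + 1) * t)\<^sup>2 * q"
    by (simp add: power2_eq_square algebra_simps)
  also have "\<dots> = - (a\<^sup>2 * (q + 2))"
    unfolding qt by (simp add: power2_eq_square algebra_simps)
  finally have "(q + 1)\<^sup>2 * (2 * t * a + t\<^sup>2 * q) = - (a\<^sup>2 * (q + 2))" .
  moreover have "0 \<le> (q + 1)\<^sup>2 * (2 * t * a + t\<^sup>2 * q)"
    using expand by simp
  ultimately have "a\<^sup>2 * (q + 2) \<le> 0"
    by linarith
  then have "a\<^sup>2 \<le> 0"
    using q by (simp add: mult_le_0_iff)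
  then show ?thesis
    by (simp add: a_def)
qed

lemma operator_norm_attained_on_subspace:
  fixes M :: "'v::euclidean_space \<Rightarrow> 'v"
  assumes lin: "linear M" and V: "subspace V" and "y \<in> V" "y \<noteq> 0"
  obtains v where "v \<in> V" "norm v = 1" "\<And>z. z \<in> V \<Longrightarrow> norm (M z) \<le> norm (M v) * norm z"
proof -
  let ?K = "V \<inter> sphere 0 1"
  have scaled: "z /\<^sub>R norm z \<in> ?K" if "z \<in> V" "z \<noteq> 0" for z
    using that V by (simp add: subspace_scale)
  have "compact ?K"
    by (intro closed_Int_compact closed_subspace V compact_sphere)
  moreover have "continuous_on ?K (\<lambda>z. norm (M z))"
    using lin by (intro continuous_intros linear_continuous_on) (simp add: linear_conv_bounded_linear)
  moreover have "?K \<noteq> {}"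
    using scaled[OF \<open>y \<in> V\<close> \<open>y \<noteq> 0\<close>] by blast
  ultimately obtain v where v: "v \<in> ?K" and max: "\<And>z. z \<in> ?K \<Longrightarrow> norm (M z) \<le> norm (M v)"
    using continuous_attains_sup[of ?K "\<lambda>z. norm (M z)"] by blast
  have "norm (M z) \<le> norm (M v) * norm z" if "z \<in> V" for z
  proof (cases "z = 0")
    case True
    then show ?thesis using lin by (simp add: linear_0)
  next
    case False
    then have "norm (M (z /\<^sub>R norm z)) \<le> norm (M v)"
      using max scaled that by blast
    then show ?thesis
      using False by (simp add: linear_scale[OF lin] inverse_eq_divide divide_le_eq mult.commute)
  qed
  then show ?thesis
    using that v by auto
qed

lemma maximal_stretch_square_eigenvector:
  fixes M :: "'v::euclidean_space \<Rightarrow> 'v"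
  assumes lin: "linear M"
    and sym: "\<And>a b. inner (M a) b = inner a (M b)"
    and V: "subspace V" and inv: "\<And>z. z \<in> V \<Longrightarrow> M z \<in> V"
    and "v \<in> V" "norm v = 1"
    and max: "\<And>z. z \<in> V \<Longrightarrow> norm (M z) \<le> norm (M v) * norm z"
  shows "M (M v) = (norm (M v))\<^sup>2 *\<^sub>R v"
proof -
  define \<rho> where "\<rho> = (norm (M v))\<^sup>2"
  define C where "C h = \<rho> *\<^sub>R h - M (M h)" for h
  have linC: "linear C"
    unfolding C_def
    by (rule linearI) (simp_all add: linear_add[OF lin] linear_scale[OF lin] algebra_simps)
  have symC: "inner a (C b) = inner b (C a)" for a b
  proof -
    have "inner a (M (M b)) = inner (M (M a)) b"
      by (simp add: sym[symmetric])
    then show ?thesis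
      by (simp add: C_def inner_diff_right inner_commute)
  qed
  have form: "inner h (C h) = \<rho> * (norm h)\<^sup>2 - (norm (M h))\<^sup>2" for h
    by (simp add: C_def inner_diff_right sym[symmetric] power2_norm_eq_inner)
  have psdC: "0 \<le> inner h (C h)" if "h \<in> V" for h
  proof -
    have "(norm (M h))\<^sup>2 \<le> (norm (M v) * norm h)\<^sup>2"
      using max[OF that] by (rule power_mono) simp
    then show ?thesis
      by (simp add: form \<rho>_def power_mult_distrib)
  qed
  have nullC: "inner v (C v) = 0"
    by (simp add: form \<rho>_def \<open>norm v = 1\<close>)
  have CvV: "C v \<in> V"
    unfolding C_def using V inv \<open>v \<in> V\<close> by (simp add: subspace_diff subspace_scale)
  have "inner (C v) (C v) = 0"
    by (rule psd_form_null_vector_orthogonal[OF linC symC V psdC \<open>v \<in> V\<close> nullC CvV])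
  then show ?thesis
    by (simp add: C_def \<rho>_def)
qed

lemma psd_eigenvector_of_square:
  fixes M :: "'v::real_inner \<Rightarrow> 'v"
  assumes lin: "linear M" and psd: "\<And>x. 0 \<le> inner x (M x)"
    and V: "subspace V" and inv: "\<And>z. z \<in> V \<Longrightarrow> M z \<in> V"
    and "v \<in> V" "v \<noteq> 0" "M (M v) = r\<^sup>2 *\<^sub>R v" "0 < r"
  obtains w where "w \<in> V" "w \<noteq> 0" "M w = r *\<^sub>R w"
proof
  \<comment> \<open>\<open>(M - r)(M + r) v = 0\<close>, and \<open>M v = -r v\<close> is excluded by positivity\<close>
  show "M v + r *\<^sub>R v \<in> V"
    using V inv \<open>v \<in> V\<close> by (simp add: subspace_add subspace_scale)
  show "M v + r *\<^sub>R v \<noteq> 0"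
  proof
    assume "M v + r *\<^sub>R v = 0"
    then have "M v = - (r *\<^sub>R v)"
      by (simp add: eq_neg_iff_add_eq_0)
    then have "inner v (M v) = - (r * inner v v)"
      by simp
    moreover have "0 < r * inner v v"
      using \<open>v \<noteq> 0\<close> \<open>0 < r\<close> by simp
    ultimately show False
      using psd[of v] by linarith
  qed
  show "M (M v + r *\<^sub>R v) = r *\<^sub>R (M v + r *\<^sub>R v)"
    using \<open>M (M v) = r\<^sup>2 *\<^sub>R v\<close>
    by (simp add: linear_add[OF lin] linear_scale[OF lin] power2_eq_square algebra_simps)
qed

lemma norm_le_if_eigenvalues_less:
  fixes M :: "'v::euclidean_space \<Rightarrow> 'v"
  assumes lin: "linear M"
    and sym: "\<And>a b. inner (M a) b = inner a (M b)"
    and psd: "\<And>x. 0 \<le> inner x (M x)"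
    and V: "subspace V" and inv: "\<And>z. z \<in> V \<Longrightarrow> M z \<in> V"
    and eig: "\<And>w \<mu>. w \<in> V \<Longrightarrow> w \<noteq> 0 \<Longrightarrow> M w = \<mu> *\<^sub>R w \<Longrightarrow> \<mu> < b"
    and "0 < b" "y \<in> V"
  shows "norm (M y) \<le> b * norm y"
proof (cases "y = 0")
  case True
  then show ?thesis using lin by (simp add: linear_0)
next
  case False
  then obtain v where v: "v \<in> V" "norm v = 1"
    and max: "\<And>z. z \<in> V \<Longrightarrow> norm (M z) \<le> norm (M v) * norm z"
    using operator_norm_attained_on_subspace[OF lin V \<open>y \<in> V\<close>] by blast
  have "norm (M v) \<le> b"
  proof (cases "norm (M v) = 0")
    case True
    then show ?thesis
      using \<open>0 < b\<close> by simp
  next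
    case False
    have sq: "M (M v) = (norm (M v))\<^sup>2 *\<^sub>R v"
      by (rule maximal_stretch_square_eigenvector[OF lin sym V inv v max])
    have nz: "v \<noteq> 0" and pos: "0 < norm (M v)"
      using v False by auto
    obtain w where w: "w \<in> V" "w \<noteq> 0" "M w = norm (M v) *\<^sub>R w"
      using psd_eigenvector_of_square[OF lin psd V inv \<open>v \<in> V\<close> nz sq pos] by blast
    have "norm (M v) < b"
      by (rule eig[OF w])
    then show ?thesis
      by simp
  qed
  have "norm (M y) \<le> norm (M v) * norm y"
    by (rule max[OF \<open>y \<in> V\<close>])
  also have "\<dots> \<le> b * norm y"
    using \<open>norm (M v) \<le> b\<close> by (rule mult_right_mono) simp
  finally show ?thesis .
qed

lemma norm_funpow_le_on_invariant:
  assumes inv: "\<And>z. z \<in> V \<Longrightarrow> M z \<in> V"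
    and bound: "\<And>z. z \<in> V \<Longrightarrow> norm (M z) \<le> b * norm z"
    and "0 \<le> b" "z \<in> V"
  shows "norm ((M ^^ k) z) \<le> b ^ k * norm z"
proof (induction k)
  case (Suc k)
  have "(M ^^ k) z \<in> V"
    using \<open>z \<in> V\<close> inv by (induction k) auto
  then have "norm ((M ^^ Suc k) z) \<le> b * norm ((M ^^ k) z)"
    by (simp add: bound)
  also have "\<dots> \<le> b * (b ^ k * norm z)"
    using Suc \<open>0 \<le> b\<close> by (rule mult_left_mono)
  finally show ?case
    by (simp add: mult.assoc)
qed simp

lemma quadratic_form_lower_bound:
  fixes T :: "'v::real_inner \<Rightarrow> 'v"
  assumes lin: "linear T"
    and sym: "\<And>a b. inner (T a) b = inner a (T b)"
    and "norm (T p) \<le> norm p" "norm (T y) \<le> \<beta> * norm y"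
    and "inner p y = 0" "inner p (T y) = 0"
  shows "(1 - \<beta>) * (norm y)\<^sup>2 \<le> inner (p + y) (p + y - T (p + y))"
proof -
  have "inner p (T p) \<le> (norm p)\<^sup>2"
    using norm_cauchy_schwarz[of p "T p"] \<open>norm (T p) \<le> norm p\<close>
    by (smt (verit) mult_left_mono norm_ge_zero power2_eq_square)
  moreover have "inner y (T y) \<le> \<beta> * (norm y)\<^sup>2"
    using norm_cauchy_schwarz[of y "T y"] \<open>norm (T y) \<le> \<beta> * norm y\<close>
    by (smt (verit) mult_left_mono norm_ge_zero power2_eq_square mult.commute mult.left_commute)
  moreover have "inner y (T p) = 0"
    using sym[of y p] \<open>inner p (T y) = 0\<close> by (simp add: inner_commute)
  ultimately show ?thesis
    using \<open>inner p y = 0\<close> \<open>inner p (T y) = 0\<close>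
    by (simp add: linear_add[OF lin] inner_add_left inner_add_right inner_diff_right
        power2_norm_eq_inner inner_commute algebra_simps)
qed

lemma orth_proj_eqI:
  fixes W :: "'v::euclidean_space set"
  assumes "subspace W" "p \<in> W" "\<And>w. w \<in> W \<Longrightarrow> inner (x - p) w = 0"
  shows "orth_proj W x = p"
  unfolding orth_proj_def
proof (rule the_equality)
  show "p \<in> W \<and> (\<forall>w\<in>W. inner (x - p) w = 0)"
    using assms by auto
next
  fix p' assume p': "p' \<in> W \<and> (\<forall>w\<in>W. inner (x - p') w = 0)"
  then have "p - p' \<in> W"
    using assms by (simp add: subspace_diff)
  then have "inner (p - p') (p - p') = inner (x - p') (p - p') - inner (x - p) (p - p')"
    by (simp add: inner_diff_left)
  also have "\<dots> = 0"
    using p' \<open>p - p' \<in> W\<close> assms(3) by simp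
  finally show "p' = p"
    by simp
qed

lemma orth_proj_mem_and_residual_orthogonal:
  fixes W :: "'v::euclidean_space set"
  assumes "subspace W"
  shows "orth_proj W x \<in> W" "x - orth_proj W x \<in> W\<^sup>\<bottom>"
proof -
  obtain p z where "p \<in> span W" "\<And>w. w \<in> span W \<Longrightarrow> orthogonal z w" "x = p + z"
    using orthogonal_subspace_decomp_exists by blast
  moreover have "span W = W"
    using assms by (rule span_eq_iff[THEN iffD2])
  ultimately have "orth_proj W x = p" "p \<in> W" "z \<in> W\<^sup>\<bottom>"
    using assms by (auto intro!: orth_proj_eqI simp: orthogonal_def orthogonal_comp_def inner_commute)
  then show "orth_proj W x \<in> W" "x - orth_proj W x \<in> W\<^sup>\<bottom>"
    using \<open>x = p + z\<close> by auto
qed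

lemma norm_orth_proj_pythagorean:
  fixes W :: "'v::euclidean_space set"
  assumes "subspace W"
  shows "(norm x)\<^sup>2 = (norm (orth_proj W x))\<^sup>2 + (norm (x - orth_proj W x))\<^sup>2"
proof -
  have "orthogonal (orth_proj W x) (x - orth_proj W x)"
    using orth_proj_mem_and_residual_orthogonal[OF assms] by (simp add: orthogonal_comp_def)
  then show ?thesis
    using norm_add_Pythagorean by fastforce
qed

lemma power2_norm_vec: "(norm z)\<^sup>2 = (\<Sum>u\<in>UNIV. (z $ u)\<^sup>2)"
  unfolding power2_norm_eq_inner inner_vec_def by (simp add: power2_eq_square)

section \<open>Translates of a set in a finite abelian group\<close>

definition int_mult :: "int \<Rightarrow> 'a::ab_group_add \<Rightarrow> 'a" where
  "int_mult j a = (\<Sum>_<nat j. a) - (\<Sum>_<nat (- j). a)"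

lemma int_mult_add_one: "int_mult (j + 1) a = int_mult j a + a"
proof (cases "0 \<le> j")
  case True
  then have "nat (j + 1) = Suc (nat j)" "nat (- (j + 1)) = 0" "nat (- j) = 0"
    by auto
  then show ?thesis
    by (simp add: int_mult_def add.commute)
next
  case False
  then have "nat (j + 1) = 0" "nat j = 0" "nat (- j) = Suc (nat (- (j + 1)))"
    by auto
  then show ?thesis
    by (simp add: int_mult_def)
qed

lemma int_mult_diff_one: "int_mult (j - 1) a = int_mult j a - a"
  using int_mult_add_one[of "j - 1" a] by simp

definition displacement :: "('a::{ab_group_add,finite} \<Rightarrow> int) \<Rightarrow> 'a" where
  "displacement m = (\<Sum>w\<in>UNIV. int_mult (m w) w)"

lemma displacement_zero [simp]: "displacement (\<lambda>_. 0) = 0"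
  by (simp add: displacement_def int_mult_def)

lemma displacement_update: "displacement (m(v := j)) = displacement m - int_mult (m v) v + int_mult j v"
proof -
  have "displacement (m(v := j)) = int_mult j v + (\<Sum>w\<in>UNIV - {v}. int_mult (m w) w)"
    unfolding displacement_def by (subst sum.remove[of UNIV v]) (auto intro!: sum.cong)
  moreover have "displacement m = int_mult (m v) v + (\<Sum>w\<in>UNIV - {v}. int_mult (m w) w)"
    unfolding displacement_def by (subst sum.remove[of UNIV v]) auto
  ultimately show ?thesis
    by (simp add: algebra_simps)
qed

lemma displacement_step:
  "displacement (m(v := m v + 1)) = displacement m + v"
  "displacement (m(v := m v - 1)) = displacement m - v"
  by (simp_all add: displacement_update int_mult_add_one int_mult_diff_one)

definition shift_boundary :: "'a::{ab_group_add,finite} set \<Rightarrow> 'a \<Rightarrow> real" where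
  "shift_boundary Q g = (\<Sum>u\<in>UNIV. indicator Q u * (1 - indicator Q (u + g)))"

lemma shift_boundary_nonneg: "0 \<le> shift_boundary Q g"
  unfolding shift_boundary_def by (intro sum_nonneg) (simp add: indicator_def)

lemma shift_boundary_zero [simp]: "shift_boundary Q 0 = 0"
  unfolding shift_boundary_def by (simp add: indicator_def)

lemma shift_boundary_add: "shift_boundary Q (a + b) \<le> shift_boundary Q a + shift_boundary Q b"
proof -
  have "shift_boundary Q (a + b)
      \<le> (\<Sum>u\<in>UNIV. indicator Q u * (1 - indicator Q (u + a))
                   + indicator Q (u + a) * (1 - indicator Q ((u + a) + b)))"
    unfolding shift_boundary_def by (intro sum_mono) (simp add: indicator_def add.assoc)
  also have "\<dots> = shift_boundary Q a + (\<Sum>u\<in>UNIV. indicator Q (u + a) * (1 - indicator Q ((u + a) + b)))"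
    by (simp add: shift_boundary_def sum.distrib)
  also have "(\<Sum>u\<in>UNIV. indicator Q (u + a) * (1 - indicator Q ((u + a) + b))) = shift_boundary Q b"
    unfolding shift_boundary_def by (rule sum_UNIV_add_shift)
  finally show ?thesis .
qed

lemma shift_boundary_uminus [simp]: "shift_boundary Q (- g) = shift_boundary Q g"
proof -
  have "(\<Sum>u\<in>UNIV. indicator Q u * indicator Q (u - g) :: real)
      = (\<Sum>u\<in>UNIV. indicator Q (u + g) * indicator Q (u + g - g))"
    by (rule sum_UNIV_add_shift[symmetric])
  then show ?thesis
    by (simp add: shift_boundary_def algebra_simps sum_subtractf)
qed

lemma shift_boundary_sum:
  "finite A \<Longrightarrow> shift_boundary Q (\<Sum>w\<in>A. f w) \<le> (\<Sum>w\<in>A. shift_boundary Q (f w))"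
proof (induction A rule: finite_induct)
  case (insert x F)
  then show ?case
    using shift_boundary_add[of Q "f x" "sum f F"] by simp
qed simp

lemma shift_boundary_int_mult: "shift_boundary Q (int_mult j a) \<le> \<bar>of_int j\<bar> * shift_boundary Q a"
proof -
  have nat_abs: "real (nat j) + real (nat (- j)) = \<bar>of_int j\<bar>"
    by (cases "0 \<le> j") auto
  have "shift_boundary Q (int_mult j a)
      \<le> shift_boundary Q (\<Sum>_<nat j. a) + shift_boundary Q (- (\<Sum>_<nat (- j). a))"
    unfolding int_mult_def using shift_boundary_add by (metis diff_conv_add_uminus)
  also have "\<dots> \<le> real (nat j) * shift_boundary Q a + real (nat (- j)) * shift_boundary Q a"
    using shift_boundary_sum[of "{..<nat j}" Q "\<lambda>_. a"] shift_boundary_sum[of "{..<nat (- j)}" Q "\<lambda>_. a"]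
    by simp
  also have "\<dots> = \<bar>of_int j\<bar> * shift_boundary Q a"
    using nat_abs by (simp add: distrib_right[symmetric])
  finally show ?thesis .
qed

lemma shift_boundary_displacement:
  "shift_boundary Q (displacement m) \<le> (\<Sum>w\<in>UNIV. \<bar>of_int (m w)\<bar> * shift_boundary Q w)"
  unfolding displacement_def
  by (rule order_trans[OF shift_boundary_sum]) (auto intro: sum_mono shift_boundary_int_mult)

lemma indicator_vec_nth: "indicator_vec Q $ u = indicator Q u"
  by (simp add: indicator_vec_def)

lemma norm_centered_indicator_vec:
  fixes Q :: "'a::finite set"
  shows "(norm (centered (indicator_vec Q)))\<^sup>2 = real (card Q) - (real (card Q))\<^sup>2 / real CARD('a)"
proof -
  define a where "a = real (card Q) / real CARD('a)"
  have card: "(\<Sum>u\<in>UNIV. indicator Q u) = real (card Q)"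
    using Indicator_Function.sum_mult_indicator[of UNIV "\<lambda>_. 1 :: real" Q] by simp
  have "centered (indicator_vec Q) $ u = indicator Q u - a" for u
    by (simp add: centered_def a_def indicator_vec_nth card)
  then have "(norm (centered (indicator_vec Q)))\<^sup>2 = (\<Sum>u\<in>UNIV. (indicator Q u - a)\<^sup>2)"
    by (simp add: power2_norm_vec)
  also have "\<dots> = (\<Sum>u\<in>UNIV. indicator Q u - 2 * a * indicator Q u + a\<^sup>2)"
    by (rule sum.cong) (auto simp: indicator_def power2_eq_square algebra_simps)
  also have "\<dots> = real (card Q) - 2 * a * real (card Q) + real CARD('a) * a\<^sup>2"
    by (simp add: sum.distrib sum_subtractf card sum_distrib_left[symmetric])
  also have "\<dots> = real (card Q) - (real (card Q))\<^sup>2 / real CARD('a)"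
    by (simp add: a_def field_simps power2_eq_square)
  finally show ?thesis .
qed

lemma norm_centered_indicator_vec_ge:
  fixes Q :: "'a::finite set"
  assumes "real (card Q) \<le> real CARD('a) / 2"
  shows "real (card Q) / 2 \<le> (norm (centered (indicator_vec Q)))\<^sup>2"
proof -
  have "real (card Q) * (real (card Q) / real CARD('a)) \<le> real (card Q) * (1 / 2)"
    using assms by (intro mult_left_mono) (simp_all add: divide_le_eq)
  then have "(real (card Q))\<^sup>2 / real CARD('a) \<le> real (card Q) / 2"
    by (simp add: power2_eq_square)
  then show ?thesis
    unfolding norm_centered_indicator_vec by linarith
qed

section \<open>The lazy random walk on a Cayley graph\<close>

lemma cay_boundary_nonneg: "0 \<le> cay_boundary S Q"
  unfolding cay_boundary_def cay_adj_def by (intro sum_nonneg) simp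

lemma square_le_of_positive_unital_linear:
  fixes E :: "('b \<Rightarrow> real) \<Rightarrow> real"
  assumes add: "\<And>f g. E (\<lambda>x. f x + g x) = E f + E g"
    and scale: "\<And>a f. E (\<lambda>x. a * f x) = a * E f"
    and unital: "E (\<lambda>_. 1) = 1"
    and pos: "\<And>f. (\<And>x. 0 \<le> f x) \<Longrightarrow> 0 \<le> E f"
  shows "(E f)\<^sup>2 \<le> E (\<lambda>x. (f x)\<^sup>2)"
proof -
  define a where "a = E f"
  have "0 \<le> E (\<lambda>x. (f x - a)\<^sup>2)"
    by (rule pos) simp
  also have "E (\<lambda>x. (f x - a)\<^sup>2) = E (\<lambda>x. (f x)\<^sup>2 + ((- 2 * a) * f x + a\<^sup>2 * 1))"
    by (simp add: power2_eq_square algebra_simps)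
  also have "\<dots> = E (\<lambda>x. (f x)\<^sup>2) - a\<^sup>2"
    by (simp only: add scale unital) (simp add: a_def power2_eq_square)
  finally show ?thesis
    by (simp add: a_def)
qed

lemma walk_length_choice:
  fixes \<tau> :: real
  assumes "0 < \<tau>" "\<tau> < 2"
  obtains k :: nat where "(1 - \<tau> / 2) ^ k \<le> 2 / 5" "real k * \<tau> < 4"
proof
  define k where "k = nat \<lceil>2 / \<tau>\<rceil>"
  have "2 / \<tau> \<le> real k" "real k < 2 / \<tau> + 1"
    using \<open>0 < \<tau>\<close> by (simp_all add: k_def) linarith
  then have k: "2 \<le> real k * \<tau>" "real k * \<tau> < 2 + \<tau>"
    using \<open>0 < \<tau>\<close> by (simp_all add: divide_le_eq field_simps)
  then show "real k * \<tau> < 4"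
    using \<open>\<tau> < 2\<close> by linarith
  have "(1 - \<tau> / 2) ^ k \<le> exp (- \<tau> / 2) ^ k"
    using \<open>\<tau> < 2\<close> exp_ge_add_one_self[of "- \<tau> / 2"] by (intro power_mono) auto
  also have "\<dots> = exp (- (real k * \<tau>) / 2)"
    by (simp add: exp_of_nat_mult[symmetric])
  also have "\<dots> \<le> exp (- 1)"
    using k by simp
  also have "\<dots> \<le> 2 / 5"
    using exp_lower_Taylor_quadratic[of 1] by (simp add: exp_minus field_simps)
  finally show "(1 - \<tau> / 2) ^ k \<le> 2 / 5" .
qed

locale cayley_graph =
  fixes S :: "'a::{ab_group_add,finite} multiset"
  assumes symmetric: "symmetric_mset S" and nonempty: "S \<noteq> {#}"
begin

abbreviation c :: "'a \<Rightarrow> real" where "c v \<equiv> real (count S v)"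
abbreviation d :: real where "d \<equiv> real (size S)"

declare nonempty [simp]

lemma size_pos [simp]: "0 < size S"
  using nonempty by (cases "size S") auto

lemma degree_pos: "0 < d"
  by simp

lemma count_uminus [simp]: "c (- v) = c v"
  using symmetric unfolding symmetric_mset_def by metis

lemma sum_count: "(\<Sum>v\<in>UNIV. c v) = d"
proof -
  have "size S = (\<Sum>v\<in>set_mset S. count S v)"
    by (simp add: size_multiset_overloaded_eq)
  also have "\<dots> = (\<Sum>v\<in>UNIV. count S v)"
    by (rule sum.mono_neutral_left) (auto simp: count_eq_zero_iff)
  finally show ?thesis
    by (metis of_nat_sum)
qed

lemma sum_count_diff: "(\<Sum>v\<in>UNIV. c v * f (u - v)) = (\<Sum>v\<in>UNIV. c v * f (u + v))"
  using sum_UNIV_uminus[of "\<lambda>v. c v * f (u - v)"] by simp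

lemma cay_laplacian_nth: "cay_laplacian S z $ u = z $ u - (\<Sum>v\<in>UNIV. c v * z $ (u + v)) / d"
proof -
  have "(\<Sum>v\<in>UNIV. cay_adj S u v * z $ v) = (\<Sum>v\<in>UNIV. cay_adj S u (v + u) * z $ (v + u))"
    by (rule sum_UNIV_add_shift[symmetric])
  then show ?thesis
    by (simp add: cay_laplacian_def cay_adj_def add.commute)
qed

lemma linear_cay_laplacian: "linear (cay_laplacian S)"
  by (rule linearI)
    (simp_all add: vec_eq_iff cay_laplacian_nth algebra_simps sum.distrib sum_distrib_left add_divide_distrib)

lemma cay_laplacian_const: "cay_laplacian S (\<chi> u. 1) = 0"
  by (simp add: vec_eq_iff cay_laplacian_nth sum_count)

definition lazy_walk :: "(real, 'a) vec \<Rightarrow> (real, 'a) vec" where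
  "lazy_walk z = z - (1 / 2) *\<^sub>R cay_laplacian S z"

lemma lazy_walk_nth:
  "lazy_walk z $ u = (\<Sum>v\<in>UNIV. c v * (z $ (u + v) + 2 * z $ u + z $ (u - v))) / (4 * d)"
proof -
  have "(\<Sum>v\<in>UNIV. c v * (z $ (u + v) + 2 * z $ u + z $ (u - v)))
      = (\<Sum>v\<in>UNIV. c v * z $ (u + v)) + 2 * z $ u * (\<Sum>v\<in>UNIV. c v) + (\<Sum>v\<in>UNIV. c v * z $ (u - v))"
    by (simp add: algebra_simps sum.distrib sum_distrib_left)
  also have "\<dots> = 2 * (\<Sum>v\<in>UNIV. c v * z $ (u + v)) + 2 * z $ u * d"
    using sum_count_diff[of "\<lambda>w. z $ w" u] by (simp add: sum_count)
  finally show ?thesis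
    unfolding lazy_walk_def by (simp add: cay_laplacian_nth field_simps)
qed

lemma linear_lazy_walk: "linear lazy_walk"
  by (rule linearI)
    (simp_all add: vec_eq_iff lazy_walk_nth algebra_simps sum.distrib sum_distrib_left add_divide_distrib)

lemma lazy_walk_eigen_iff: "lazy_walk w = \<mu> *\<^sub>R w \<longleftrightarrow> cay_laplacian S w = (2 * (1 - \<mu>)) *\<^sub>R w"
  by (auto simp: lazy_walk_def vec_eq_iff field_simps)

lemma lazy_walk_const: "lazy_walk (\<chi> u. 1) = (\<chi> u. 1)"
  by (simp add: lazy_walk_def cay_laplacian_const)

lemma inner_lazy_walk:
  "inner (lazy_walk z) w = (\<Sum>v\<in>UNIV. c v * (\<Sum>u\<in>UNIV. (z $ (u + v) + 2 * z $ u + z $ (u - v)) * w $ u)) / (4 * d)"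
  by (simp add: inner_vec_def lazy_walk_nth sum_divide_distrib sum_distrib_left sum_distrib_right
      mult.assoc mult.commute mult.left_commute) (subst sum.swap, simp)

lemma lazy_walk_symmetric: "inner (lazy_walk z) w = inner z (lazy_walk w)"
proof -
  have "(\<Sum>u\<in>UNIV. (z $ (u + v) + 2 * z $ u + z $ (u - v)) * w $ u)
      = (\<Sum>u\<in>UNIV. (w $ (u + v) + 2 * w $ u + w $ (u - v)) * z $ u)" for v
  proof -
    have "(\<Sum>u\<in>UNIV. z $ (u + v) * w $ u) = (\<Sum>u\<in>UNIV. z $ u * w $ (u - v))"
      using sum_UNIV_add_shift[of "\<lambda>u. z $ u * w $ (u - v)" v] by simp
    moreover have "(\<Sum>u\<in>UNIV. z $ (u - v) * w $ u) = (\<Sum>u\<in>UNIV. z $ u * w $ (u + v))"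
      using sum_UNIV_add_shift[of "\<lambda>u. z $ u * w $ (u + v)" "- v"] by simp
    ultimately show ?thesis
      by (simp add: algebra_simps sum.distrib sum_distrib_left)
  qed
  then show ?thesis
    by (simp add: inner_lazy_walk inner_commute[of z])
qed

lemma lazy_walk_nonneg: "0 \<le> inner z (lazy_walk z)"
proof -
  have square: "(\<Sum>u\<in>UNIV. (z $ (u + v) + 2 * z $ u + z $ (u - v)) * z $ u) = (\<Sum>u\<in>UNIV. (z $ u + z $ (u + v))\<^sup>2)" for v
  proof -
    have "(\<Sum>u\<in>UNIV. z $ (u - v) * z $ u) = (\<Sum>u\<in>UNIV. z $ u * z $ (u + v))"
      using sum_UNIV_add_shift[of "\<lambda>u. z $ u * z $ (u + v)" "- v"] by simp
    moreover have "(\<Sum>u\<in>UNIV. (z $ (u + v))\<^sup>2) = (\<Sum>u\<in>UNIV. (z $ u)\<^sup>2)"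
      using sum_UNIV_add_shift[of "\<lambda>u. (z $ u)\<^sup>2" v] by simp
    ultimately show ?thesis
      by (simp add: algebra_simps power2_eq_square sum.distrib sum_distrib_left)
  qed
  show ?thesis
    using degree_pos
    by (simp add: inner_commute[of z] inner_lazy_walk square sum_nonneg divide_nonneg_pos)
qed

lemma linear_lazy_walk_pow: "linear (lazy_walk ^^ k)"
proof (induction k)
  case (Suc k)
  show ?case
    unfolding funpow.simps(2) by (rule linear_compose[OF Suc linear_lazy_walk])
qed (simp add: linear_iff)

lemma lazy_walk_pow_symmetric: "inner ((lazy_walk ^^ k) a) b = inner a ((lazy_walk ^^ k) b)"
proof (induction k arbitrary: a b)
  case (Suc k)
  have "inner ((lazy_walk ^^ Suc k) a) b = inner ((lazy_walk ^^ k) (lazy_walk a)) b"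
    by (simp add: funpow_swap1)
  also have "\<dots> = inner (lazy_walk a) ((lazy_walk ^^ k) b)"
    by (rule Suc)
  also have "\<dots> = inner a ((lazy_walk ^^ Suc k) b)"
    by (simp add: lazy_walk_symmetric)
  finally show ?case .
qed simp

lemma lazy_walk_pow_const: "(lazy_walk ^^ k) (\<chi> u. 1) = (\<chi> u. 1)"
  by (induction k) (simp_all add: lazy_walk_const)

text \<open>The lazy walk lifted to \<open>\<int>\<^sup>\<Gamma>\<close>: coordinate \<open>v\<close> of \<open>m\<close> is the net number of
  steps taken along the generator \<open>v\<close>, so the walk on \<open>\<Gamma>\<close> is at \<open>displacement m\<close>.\<close>

definition walk_step :: "(('a \<Rightarrow> int) \<Rightarrow> real) \<Rightarrow> ('a \<Rightarrow> int) \<Rightarrow> real" where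
  "walk_step f m = (\<Sum>v\<in>UNIV. c v * (f (m(v := m v + 1)) + 2 * f m + f (m(v := m v - 1)))) / (4 * d)"

lemma walk_step_add: "walk_step (\<lambda>m. f m + g m) = (\<lambda>m. walk_step f m + walk_step g m)"
  by (simp add: fun_eq_iff walk_step_def algebra_simps sum.distrib add_divide_distrib)

lemma walk_step_scale: "walk_step (\<lambda>m. a * f m) = (\<lambda>m. a * walk_step f m)"
  by (simp add: fun_eq_iff walk_step_def algebra_simps sum_distrib_left)

lemma walk_step_const: "walk_step (\<lambda>_. a) = (\<lambda>_. a)"
  by (simp add: fun_eq_iff walk_step_def sum_distrib_right[symmetric] sum_count)

lemma walk_step_mono: "(\<And>m. f m \<le> g m) \<Longrightarrow> walk_step f m \<le> walk_step g m"
  unfolding walk_step_def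
  by (intro divide_right_mono sum_mono mult_left_mono add_mono) auto

lemma walk_steps_add: "(walk_step ^^ k) (\<lambda>m. f m + g m) = (\<lambda>m. (walk_step ^^ k) f m + (walk_step ^^ k) g m)"
  by (induction k) (simp_all add: walk_step_add)

lemma walk_steps_scale: "(walk_step ^^ k) (\<lambda>m. a * f m) = (\<lambda>m. a * (walk_step ^^ k) f m)"
  by (induction k) (simp_all add: walk_step_scale)

lemma walk_steps_const: "(walk_step ^^ k) (\<lambda>_. a) = (\<lambda>_. a)"
  by (induction k) (simp_all add: walk_step_const)

lemma walk_steps_diff: "(walk_step ^^ k) (\<lambda>m. f m - g m) = (\<lambda>m. (walk_step ^^ k) f m - (walk_step ^^ k) g m)"
  using walk_steps_add[of k f "\<lambda>m. - g m"] walk_steps_scale[of k "- 1" g] by simp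

lemma walk_steps_mono: "(\<And>m. f m \<le> g m) \<Longrightarrow> (walk_step ^^ k) f m \<le> (walk_step ^^ k) g m"
proof (induction k arbitrary: m)
  case (Suc k)
  then show ?case
    by (simp add: walk_step_mono)
qed simp

lemma walk_steps_sum:
  "finite A \<Longrightarrow> (walk_step ^^ k) (\<lambda>m. \<Sum>u\<in>A. f u m) = (\<lambda>m. \<Sum>u\<in>A. (walk_step ^^ k) (f u) m)"
  by (induction A rule: finite_induct) (simp_all add: walk_steps_const walk_steps_add)

lemma walk_steps_square_le: "((walk_step ^^ k) f m)\<^sup>2 \<le> (walk_step ^^ k) (\<lambda>m. (f m)\<^sup>2) m"
proof (rule square_le_of_positive_unital_linear[where E = "\<lambda>f. (walk_step ^^ k) f m"])
  show "0 \<le> (walk_step ^^ k) g m" if "\<And>m. 0 \<le> g m" for g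
    using walk_steps_mono[of "\<lambda>_. 0" g k m] that by (simp add: walk_steps_const)
qed (simp_all add: walk_steps_add walk_steps_scale walk_steps_const)

lemma walk_step_coord_square:
  "walk_step (\<lambda>m. (of_int (m v))\<^sup>2) m = (of_int (m v))\<^sup>2 + c v / (2 * d)"
proof -
  have "walk_step (\<lambda>m. (of_int (m v))\<^sup>2) m
      = (\<Sum>w\<in>UNIV. c w * ((of_int ((m(w := m w + 1)) v))\<^sup>2 + 2 * (of_int (m v))\<^sup>2
          + (of_int ((m(w := m w - 1)) v))\<^sup>2)) / (4 * d)"
    by (simp only: walk_step_def)
  also have "(\<Sum>w\<in>UNIV. c w * ((of_int ((m(w := m w + 1)) v))\<^sup>2 + 2 * (of_int (m v))\<^sup>2
          + (of_int ((m(w := m w - 1)) v))\<^sup>2))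
      = (\<Sum>w\<in>UNIV. c w * (4 * (of_int (m v))\<^sup>2) + (if w = v then 2 * c v else 0))"
    by (rule sum.cong) (auto simp: power2_eq_square algebra_simps)
  also have "\<dots> = 4 * (of_int (m v))\<^sup>2 * d + 2 * c v"
    by (simp add: sum.distrib sum_distrib_right[symmetric] sum_count mult.commute)
  finally show ?thesis
    by (simp add: field_simps)
qed

lemma walk_steps_coord_square:
  "(walk_step ^^ k) (\<lambda>m. (of_int (m v))\<^sup>2) = (\<lambda>m. (of_int (m v))\<^sup>2 + real k * c v / (2 * d))"
proof (induction k)
  case (Suc k)
  have "walk_step (\<lambda>m. (of_int (m v))\<^sup>2) = (\<lambda>m. (of_int (m v))\<^sup>2 + c v / (2 * d))"
    by (simp add: fun_eq_iff walk_step_coord_square)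
  then show ?case
    by (simp add: funpow_Suc_right Suc walk_steps_add walk_steps_const add_divide_distrib algebra_simps
        del: funpow.simps)
qed simp

lemma walk_steps_abs_coord:
  "(walk_step ^^ k) (\<lambda>m. \<bar>of_int (m v)\<bar>) (\<lambda>_. 0) \<le> c v * sqrt (real k / (2 * d))"
proof -
  let ?E = "(walk_step ^^ k) (\<lambda>m. \<bar>of_int (m v)\<bar>) (\<lambda>_. 0)"
  have "?E\<^sup>2 \<le> (walk_step ^^ k) (\<lambda>m. \<bar>of_int (m v)\<bar>\<^sup>2) (\<lambda>_. 0)"
    by (rule walk_steps_square_le)
  also have "\<dots> = c v * (real k / (2 * d))"
    by (simp add: walk_steps_coord_square)
  finally have "?E \<le> sqrt (c v * (real k / (2 * d)))"
    by (rule real_le_rsqrt)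
  also have "\<dots> = sqrt (c v) * sqrt (real k / (2 * d))"
    by (rule real_sqrt_mult)
  also have "\<dots> \<le> c v * sqrt (real k / (2 * d))"
  proof (rule mult_right_mono)
    have "c v \<le> (c v)\<^sup>2"
      by (cases "count S v") (simp_all add: power2_eq_square)
    then show "sqrt (c v) \<le> c v"
      using real_sqrt_le_mono[of "c v" "(c v)\<^sup>2"] by simp
  qed simp
  finally show ?thesis .
qed

lemma lazy_walk_pow_nth:
  "(lazy_walk ^^ k) z $ u = (walk_step ^^ k) (\<lambda>m. z $ (u + displacement m)) (\<lambda>_. 0)"
proof (induction k arbitrary: z)
  case (Suc k)
  have "walk_step (\<lambda>m. z $ (u + displacement m)) = (\<lambda>m. lazy_walk z $ (u + displacement m))"
    unfolding walk_step_def displacement_step by (simp add: fun_eq_iff lazy_walk_nth algebra_simps)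
  then show ?case
    using Suc[of "lazy_walk z"] by (simp add: funpow_Suc_right del: funpow.simps)
qed simp

lemma norm_lazy_walk_pow_le: "norm ((lazy_walk ^^ k) z) \<le> norm z"
proof -
  have shift: "(\<Sum>u\<in>UNIV. (z $ (u + displacement m))\<^sup>2) = (norm z)\<^sup>2" for m
    using sum_UNIV_add_shift[of "\<lambda>u. (z $ u)\<^sup>2" "displacement m"] by (simp add: power2_norm_vec)
  have "(norm ((lazy_walk ^^ k) z))\<^sup>2 = (\<Sum>u\<in>UNIV. ((lazy_walk ^^ k) z $ u)\<^sup>2)"
    by (rule power2_norm_vec)
  also have "\<dots> \<le> (\<Sum>u\<in>UNIV. (walk_step ^^ k) (\<lambda>m. (z $ (u + displacement m))\<^sup>2) (\<lambda>_. 0))"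
    unfolding lazy_walk_pow_nth by (intro sum_mono walk_steps_square_le)
  also have "\<dots> = (walk_step ^^ k) (\<lambda>m. \<Sum>u\<in>UNIV. (z $ (u + displacement m))\<^sup>2) (\<lambda>_. 0)"
    using walk_steps_sum[of UNIV k "\<lambda>u m. (z $ (u + displacement m))\<^sup>2"] by simp
  also have "\<dots> = (norm z)\<^sup>2"
    by (simp add: shift walk_steps_const)
  finally show ?thesis
    by (rule power2_le_imp_le) simp
qed

lemma cay_boundary_eq_sum_shift_boundary:
  "cay_boundary S Q = (\<Sum>v\<in>UNIV. c v * shift_boundary Q v)"
proof -
  have out: "(\<Sum>w\<in>UNIV - Q. cay_adj S u w) = (\<Sum>v\<in>UNIV. c v * (1 - indicator Q (u + v)))" for u
  proof -
    have "(\<Sum>w\<in>UNIV - Q. cay_adj S u w) = (\<Sum>w\<in>UNIV. c (w - u) * (1 - indicator Q w))"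
      by (rule sum.mono_neutral_cong_left) (auto simp: cay_adj_def)
    also have "\<dots> = (\<Sum>w\<in>UNIV. c (w + u - u) * (1 - indicator Q (w + u)))"
      by (rule sum_UNIV_add_shift[symmetric])
    finally show ?thesis
      by (simp add: add.commute)
  qed
  have "cay_boundary S Q = (\<Sum>u\<in>UNIV. indicator Q u * (\<Sum>v\<in>UNIV. c v * (1 - indicator Q (u + v))))"
    unfolding cay_boundary_def out by (rule sum.mono_neutral_cong_left) auto
  also have "\<dots> = (\<Sum>v\<in>UNIV. c v * shift_boundary Q v)"
    unfolding shift_boundary_def sum_distrib_left by (subst sum.swap) (simp add: mult.left_commute)
  finally show ?thesis .
qed

lemma expected_shift_boundary_le:
  "(walk_step ^^ k) (\<lambda>m. shift_boundary Q (displacement m)) (\<lambda>_. 0)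
     \<le> sqrt (real k / (2 * d)) * cay_boundary S Q"
proof -
  have "(walk_step ^^ k) (\<lambda>m. shift_boundary Q (displacement m)) (\<lambda>_. 0)
      \<le> (walk_step ^^ k) (\<lambda>m. \<Sum>w\<in>UNIV. shift_boundary Q w * \<bar>of_int (m w)\<bar>) (\<lambda>_. 0)"
    by (intro walk_steps_mono order_trans[OF shift_boundary_displacement]) (simp add: mult.commute)
  also have "\<dots> = (\<Sum>w\<in>UNIV. shift_boundary Q w * (walk_step ^^ k) (\<lambda>m. \<bar>of_int (m w)\<bar>) (\<lambda>_. 0))"
    by (simp add: walk_steps_sum walk_steps_scale)
  also have "\<dots> \<le> (\<Sum>w\<in>UNIV. shift_boundary Q w * (c w * sqrt (real k / (2 * d))))"
    by (intro sum_mono mult_left_mono walk_steps_abs_coord shift_boundary_nonneg)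
  also have "\<dots> = sqrt (real k / (2 * d)) * cay_boundary S Q"
    by (simp add: cay_boundary_eq_sum_shift_boundary sum_distrib_right mult_ac)
  finally show ?thesis .
qed

lemma indicator_quadratic_form:
  "inner (indicator_vec Q) (indicator_vec Q - (lazy_walk ^^ k) (indicator_vec Q))
     = (walk_step ^^ k) (\<lambda>m. shift_boundary Q (displacement m)) (\<lambda>_. 0)"
proof -
  have "inner (indicator_vec Q) (indicator_vec Q - (lazy_walk ^^ k) (indicator_vec Q))
      = (\<Sum>u\<in>UNIV. indicator Q u * (1 - (walk_step ^^ k) (\<lambda>m. indicator Q (u + displacement m)) (\<lambda>_. 0)))"
    unfolding inner_vec_def
    by (intro sum.cong refl) (simp add: lazy_walk_pow_nth indicator_vec_def indicator_def of_bool_def)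
  also have "\<dots> = (\<Sum>u\<in>UNIV. (walk_step ^^ k) (\<lambda>m. indicator Q u * (1 - indicator Q (u + displacement m))) (\<lambda>_. 0))"
    by (simp only: walk_steps_scale walk_steps_diff walk_steps_const)
  also have "\<dots> = (walk_step ^^ k) (\<lambda>m. shift_boundary Q (displacement m)) (\<lambda>_. 0)"
    unfolding shift_boundary_def by (simp only: walk_steps_sum[OF finite_class.finite_UNIV])
  finally show ?thesis .
qed

lemma centered_quadratic_form:
  "inner (centered z) (centered z - (lazy_walk ^^ k) (centered z)) = inner z (z - (lazy_walk ^^ k) z)"
proof -
  define a where "a = (\<Sum>u\<in>UNIV. z $ u) / real CARD('a)"
  let ?T = "lazy_walk ^^ k" and ?one = "(\<chi> u. 1) :: (real, 'a) vec"
  have centered: "centered z = z - a *\<^sub>R ?one"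
    by (simp add: centered_def a_def)
  have "?T (centered z) = ?T z - a *\<^sub>R ?one"
    by (simp add: centered linear_diff[OF linear_lazy_walk_pow] linear_scale[OF linear_lazy_walk_pow]
        lazy_walk_pow_const)
  then have residual: "centered z - ?T (centered z) = z - ?T z"
    by (simp add: centered)
  have "inner ?one (z - ?T z) = 0"
    using lazy_walk_pow_symmetric[of k ?one z] by (simp add: lazy_walk_pow_const inner_diff_right)
  then show ?thesis
    unfolding residual by (simp add: centered inner_diff_left)
qed

lemma subspace_low_space: "subspace (low_space S \<tau>)"
  by (simp add: low_space_def subspace_span subspace_UNIV)

lemma kernel_in_low_space:
  assumes "cay_laplacian S w = 0" "0 \<le> \<tau>"
  shows "w \<in> low_space S \<tau>"
proof (cases "w = 0")
  case True
  then show ?thesis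
    using subspace_low_space by (simp add: subspace_0)
next
  case False
  then show ?thesis
    using assms by (auto simp: low_space_def intro!: span_base exI[of _ 0])
qed

lemma cay_laplacian_indicator_vec:
  assumes "cay_boundary S Q = 0"
  shows "cay_laplacian S (indicator_vec Q) = 0"
proof -
  have zero: "\<forall>v\<in>UNIV. c v * shift_boundary Q v = 0"
    using assms by (subst (asm) cay_boundary_eq_sum_shift_boundary, subst (asm) sum_nonneg_eq_0_iff)
      (auto intro: mult_nonneg_nonneg shift_boundary_nonneg)
  then have "shift_boundary Q v = 0" if "c v \<noteq> 0" for v
    using zero[rule_format, of v] that by simp
  then have closed: "u + v \<in> Q" if "c v \<noteq> 0" "u \<in> Q" for u v
    using that unfolding shift_boundary_def
    by (subst (asm) sum_nonneg_eq_0_iff) (auto simp: indicator_def split: if_splits)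
  \<comment> \<open>since \<open>S\<close> is symmetric, \<open>Q\<close> is also closed under adding \<open>-v\<close>\<close>
  have shift_iff: "u + v \<in> Q \<longleftrightarrow> u \<in> Q" if "c v \<noteq> 0" for u v
    using closed[OF that, of u] closed[of "- v" "u + v"] that by auto
  have shift_invariant: "c v * indicator_vec Q $ (u + v) = c v * indicator_vec Q $ u" for u v
    using shift_iff[of v u] by (cases "c v = 0") (simp_all add: indicator_vec_def)
  have "(\<Sum>v\<in>UNIV. c v * indicator_vec Q $ (u + v)) = (\<Sum>v\<in>UNIV. c v * indicator_vec Q $ u)" for u
    by (intro sum.cong refl shift_invariant)
  then show ?thesis
    by (simp add: vec_eq_iff cay_laplacian_nth sum_distrib_right[symmetric] sum_count)
qed

lemma centered_indicator_vec_in_low_space: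
  assumes "cay_boundary S Q = 0" "0 \<le> \<tau>"
  shows "centered (indicator_vec Q) \<in> low_space S \<tau>"
proof (rule kernel_in_low_space[OF _ \<open>0 \<le> \<tau>\<close>])
  show "cay_laplacian S (centered (indicator_vec Q)) = 0"
    using linear_cay_laplacian assms(1)
    by (simp add: centered_def linear_diff linear_scale cay_laplacian_indicator_vec cay_laplacian_const)
qed

lemma lazy_walk_low_space:
  assumes "w \<in> low_space S \<tau>"
  shows "lazy_walk w \<in> low_space S \<tau>"
proof (cases "2 \<le> \<tau>")
  case False
  let ?E = "{x. x \<noteq> 0 \<and> (\<exists>lam. lam \<le> \<tau> \<and> cay_laplacian S x = lam *\<^sub>R x)}"
  have "lazy_walk ` ?E \<subseteq> span ?E"
  proof
    fix y
    assume "y \<in> lazy_walk ` ?E"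
    then obtain e lam where "e \<in> ?E" "cay_laplacian S e = lam *\<^sub>R e" "y = lazy_walk e"
      by auto
    then have "y = (1 - lam / 2) *\<^sub>R e"
      by (simp add: lazy_walk_def algebra_simps)
    then show "y \<in> span ?E"
      using \<open>e \<in> ?E\<close> by (simp add: span_base span_mul)
  qed
  then have "span (lazy_walk ` ?E) \<subseteq> span (span ?E)"
    by (rule span_mono)
  then have "span (lazy_walk ` ?E) \<subseteq> span ?E"
    by (simp only: span_span)
  then show ?thesis
    using assms False span_linear_image[OF linear_lazy_walk, of ?E] by (auto simp: low_space_def)
qed (simp add: low_space_def)

lemma lazy_walk_orthogonal_low:
  assumes "y \<in> (low_space S \<tau>)\<^sup>\<bottom>"
  shows "lazy_walk y \<in> (low_space S \<tau>)\<^sup>\<bottom>"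
  unfolding orthogonal_comp_def orthogonal_def
proof safe
  fix w
  assume "w \<in> low_space S \<tau>"
  then have "inner (lazy_walk w) y = 0"
    using assms lazy_walk_low_space by (auto simp: orthogonal_comp_def orthogonal_def)
  then show "inner w (lazy_walk y) = 0"
    by (simp add: lazy_walk_symmetric)
qed

lemma norm_lazy_walk_orthogonal_low:
  assumes "\<tau> < 2" "y \<in> (low_space S \<tau>)\<^sup>\<bottom>"
  shows "norm (lazy_walk y) \<le> (1 - \<tau> / 2) * norm y"
proof (rule norm_le_if_eigenvalues_less[OF linear_lazy_walk lazy_walk_symmetric lazy_walk_nonneg
      subspace_orthogonal_comp lazy_walk_orthogonal_low])
  fix w \<mu>
  assume w: "w \<in> (low_space S \<tau>)\<^sup>\<bottom>" "w \<noteq> 0" "lazy_walk w = \<mu> *\<^sub>R w"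
  show "\<mu> < 1 - \<tau> / 2"
  proof (rule ccontr)
    assume "\<not> \<mu> < 1 - \<tau> / 2"
    moreover have "cay_laplacian S w = (2 * (1 - \<mu>)) *\<^sub>R w"
      using w(3) lazy_walk_eigen_iff by blast
    ultimately have "w \<in> low_space S \<tau>"
      using w(2) \<open>\<tau> < 2\<close> by (auto simp: low_space_def intro!: span_base)
    then show False
      using w(1,2) by (auto simp: orthogonal_comp_def orthogonal_def)
  qed
qed (use assms in auto)

lemma orthogonal_low_component_bound:
  assumes "\<tau> < 2" and y: "y \<in> (low_space S \<tau>)\<^sup>\<bottom>"
    and low: "centered (indicator_vec Q) - y \<in> low_space S \<tau>"
  shows "(1 - (1 - \<tau> / 2) ^ k) * (norm y)\<^sup>2 \<le> sqrt (real k / (2 * d)) * cay_boundary S Q"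
proof -
  let ?T = "lazy_walk ^^ k"
  define p where "p = centered (indicator_vec Q) - y"
  have "?T y \<in> (low_space S \<tau>)\<^sup>\<bottom>"
    using y lazy_walk_orthogonal_low by (induction k) auto
  then have orth: "inner p y = 0" "inner p (?T y) = 0"
    using y low by (auto simp: p_def orthogonal_comp_def orthogonal_def)
  have "norm (?T y) \<le> (1 - \<tau> / 2) ^ k * norm y"
    using \<open>\<tau> < 2\<close> y
    by (intro norm_funpow_le_on_invariant[OF lazy_walk_orthogonal_low norm_lazy_walk_orthogonal_low]) auto
  then have "(1 - (1 - \<tau> / 2) ^ k) * (norm y)\<^sup>2 \<le> inner (p + y) (p + y - ?T (p + y))"
    by (rule quadratic_form_lower_bound[OF linear_lazy_walk_pow lazy_walk_pow_symmetric
          norm_lazy_walk_pow_le _ orth])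
  also have "\<dots> = (walk_step ^^ k) (\<lambda>m. shift_boundary Q (displacement m)) (\<lambda>_. 0)"
    by (simp add: p_def centered_quadratic_form indicator_quadratic_form)
  also have "\<dots> \<le> sqrt (real k / (2 * d)) * cay_boundary S Q"
    by (rule expected_shift_boundary_le)
  finally show ?thesis .
qed

lemma orthogonal_low_component_small:
  assumes "0 < \<epsilon>" "1 \<le> card Q"
    and cond: "cay_cond_set S Q \<le> 2 * \<phi>" and "0 < cay_boundary S Q"
    and \<tau>: "\<tau> = 100 * d * \<phi>\<^sup>2 / \<epsilon>\<^sup>2" "\<tau> < 2"
    and y: "y \<in> (low_space S \<tau>)\<^sup>\<bottom>" "centered (indicator_vec Q) - y \<in> low_space S \<tau>"
  shows "(norm y)\<^sup>2 \<le> \<epsilon> * real (card Q) / 2"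
proof -
  define q where "q = real (card Q)"
  have "q \<ge> 1"
    using \<open>1 \<le> card Q\<close> by (simp add: q_def)
  have B: "cay_boundary S Q \<le> 2 * \<phi> * d * q"
    using cond \<open>q \<ge> 1\<close> by (simp add: cay_cond_set_def q_def divide_le_eq mult_ac)
  then have "0 < 2 * \<phi> * d * q"
    using \<open>0 < cay_boundary S Q\<close> by linarith
  then have "0 < \<phi>"
    using \<open>q \<ge> 1\<close> by (simp add: zero_less_mult_iff)
  then have "0 < \<tau>"
    using \<tau>(1) \<open>0 < \<epsilon>\<close> by simp
  then obtain k where k: "(1 - \<tau> / 2) ^ k \<le> 2 / 5" "real k * \<tau> < 4"
    using walk_length_choice \<tau>(2) by blast
  have walk: "sqrt (real k / (2 * d)) * (2 * \<phi> * d) \<le> 3 / 10 * \<epsilon>"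
  proof -
    have "(sqrt (real k / (2 * d)) * (2 * \<phi> * d))\<^sup>2 = 2 * (real k * \<tau>) * \<epsilon>\<^sup>2 / 100"
      using \<open>0 < \<epsilon>\<close> by (simp add: \<tau>(1) power_mult_distrib field_simps power2_eq_square)
    also have "\<dots> \<le> (3 / 10 * \<epsilon>)\<^sup>2"
    proof -
      have "2 * (real k * \<tau>) * \<epsilon>\<^sup>2 \<le> 9 * \<epsilon>\<^sup>2"
        using k(2) by (intro mult_right_mono) auto
      moreover have "(3 / 10 * \<epsilon>)\<^sup>2 = 9 / 100 * \<epsilon>\<^sup>2"
        by (simp add: power2_eq_square)
      ultimately show ?thesis
        by linarith
    qed
    finally show ?thesis
      using \<open>0 < \<epsilon>\<close> by (simp add: power2_le_iff_abs_le)
  qed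
  have "3 / 5 * (norm y)\<^sup>2 \<le> (1 - (1 - \<tau> / 2) ^ k) * (norm y)\<^sup>2"
    using k(1) by (intro mult_right_mono) auto
  also have "\<dots> \<le> sqrt (real k / (2 * d)) * cay_boundary S Q"
    using orthogonal_low_component_bound[OF \<tau>(2) y] .
  also have "\<dots> \<le> sqrt (real k / (2 * d)) * (2 * \<phi> * d) * q"
    using B by (simp add: mult_left_mono mult.assoc)
  also have "\<dots> \<le> 3 / 10 * \<epsilon> * q"
    using walk \<open>q \<ge> 1\<close> by (intro mult_right_mono) auto
  finally have "3 / 5 * (norm y)\<^sup>2 \<le> 3 / 10 * \<epsilon> * q" .
  then show ?thesis
    unfolding q_def[symmetric] by linarith
qed

lemma norm_residual_low_projection_le:
  assumes "0 < \<epsilon>" "1 \<le> card Q" "real (card Q) \<le> real CARD('a) / 2"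
    and cond: "cay_cond_set S Q \<le> 2 * \<phi>" and \<tau>: "\<tau> = 100 * d * \<phi>\<^sup>2 / \<epsilon>\<^sup>2"
  defines "x \<equiv> centered (indicator_vec Q)"
  shows "(norm (x - orth_proj (low_space S \<tau>) x))\<^sup>2 \<le> \<epsilon> * (norm x)\<^sup>2"
proof -
  define W where "W = low_space S \<tau>"
  define y where "y = x - orth_proj W x"
  have W: "orth_proj W x \<in> W" "y \<in> W\<^sup>\<bottom>"
    using orth_proj_mem_and_residual_orthogonal[OF subspace_low_space] by (simp_all add: W_def y_def)
  have "(norm y)\<^sup>2 \<le> \<epsilon> * (norm x)\<^sup>2"
  proof (cases "x \<in> W")
    case True
    then have "y \<in> W \<inter> W\<^sup>\<bottom>"
      using W subspace_low_space by (simp add: W_def y_def subspace_diff)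
    then have "y = 0"
      using orthogonal_Int_0[OF subspace_low_space] by (simp add: W_def)
    then show ?thesis
      using \<open>0 < \<epsilon>\<close> by simp
  next
    case False
    then have "\<tau> < 2"
      by (auto simp: W_def low_space_def split: if_splits)
    have "0 \<le> \<tau>"
      by (simp add: \<tau>)
    then have "cay_boundary S Q \<noteq> 0"
      using False centered_indicator_vec_in_low_space by (auto simp: W_def x_def)
    with \<open>\<tau> < 2\<close> have "(norm y)\<^sup>2 \<le> \<epsilon> * real (card Q) / 2"
      using orthogonal_low_component_small[OF \<open>0 < \<epsilon>\<close> \<open>1 \<le> card Q\<close> cond _ \<tau>] W cay_boundary_nonneg[of S Q]
      by (simp add: W_def x_def y_def)
    also have "\<dots> \<le> \<epsilon> * (norm x)\<^sup>2"
      using norm_centered_indicator_vec_ge[OF assms(3)] \<open>0 < \<epsilon>\<close> by (simp add: x_def)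
    finally show ?thesis .
  qed
  then show ?thesis
    by (simp add: y_def W_def)
qed

end

theorem theorem5p1:
  fixes S :: "'a::{ab_group_add,finite} multiset"
    and \<epsilon> :: real and Q :: "'a set"
  assumes "symmetric_mset S"
    and "S \<noteq> {#}"
    and "0 < \<epsilon>" and "\<epsilon> \<le> 1"
    and "1 \<le> card Q" and "real (card Q) \<le> real CARD('a) / 2"
    and "cay_cond_set S Q \<le> 2 * cay_conductance S"
  shows "let \<tau> = 100 * real (size S) * (cay_conductance S)\<^sup>2 / \<epsilon>\<^sup>2
         in (norm (orth_proj (low_space S \<tau>) (centered (indicator_vec Q))))\<^sup>2
            \<ge> (1 - \<epsilon>) * (norm (centered (indicator_vec Q)))\<^sup>2"
proof -
  interpret cayley_graph S
    using assms(1,2) by unfold_locales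
  let ?x = "centered (indicator_vec Q)"
    and ?W = "low_space S (100 * d * (cay_conductance S)\<^sup>2 / \<epsilon>\<^sup>2)"
  have "(norm (?x - orth_proj ?W ?x))\<^sup>2 \<le> \<epsilon> * (norm ?x)\<^sup>2"
    using norm_residual_low_projection_le[OF assms(3,5,6,7) refl] .
  moreover have "(norm ?x)\<^sup>2 = (norm (orth_proj ?W ?x))\<^sup>2 + (norm (?x - orth_proj ?W ?x))\<^sup>2"
    by (rule norm_orth_proj_pythagorean[OF subspace_low_space])
  ultimately show ?thesis
    by (simp add: Let_def algebra_simps)
qed

end
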